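(* Let $(C,S)$ be a partially shaded tree, where $C$ is the support tree of a vertex of a non-degenerate transportation polytope $\mathrm{TP}(u,v)$, and assume: (1) (UNO) holds in $(C,S)$; (2) no shaded $+$edge is incident to an open supply node; (3) a supply node $\sigma$ satisfies (SIN) in $(C,S)$. Choose an edge $e$ incident to $\sigma$ as follows: if there is a $-$edge of $F$ incident to $\sigma$ that is not yet shaded (i.e. not in $S$), let $e$ be one such edge; otherwise let $e$ be the unique $+$edge of $F$ incident to $\sigma$. Then (inserting and) shading $e$ in $(C,S)$ to produce the succeeding tree $\hat C$ does not delete any shaded edge.
   Context: Let $N_1,N_2\ge1$, $u\in\mathbb{R}_{>0}^{N_1}$, $v\in\mathbb{R}_{>0}^{N_2}$ with $\sum_iu_i=\sum_jv_j$, and $\mathrm{TP}(u,v)=\{y\in\mathbb{R}^{N_1\times N_2}: \sum_j y_{ij}=u_i\ \forall i,\ \sum_i y_{ij}=v_j\ \forall j,\ y\ge 0\}$. Supply nodes $\sigma^1,\dots,\sigma^{N_1}$ and demand nodes $\delta^1,\dots,\delta^{N_2}$ form $K_{N_1,N_2}$; the support graph of $y$ consists of edges $\{\sigma^i,\delta^j\}$ with $y_{ij}>0$. $\mathrm{TP}(u,v)$ is non-degenerate if there are no nonempty proper $I\subsetneq\{1,\dots,N_1\}$, $J\subsetneq\{1,\dots,N_2\}$ with $\sum_{i\in I}u_i=\sum_{j\in J}v_j$; then each vertex's support graph is a spanning tree of $K_{N_1,N_2}$ determining the vertex (called a tree). Pivot: for a tree $C$ and an edge $e\notin C$, $C\cup\{e\}$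 contains a unique cycle; alternately increasing (starting at $e$) and decreasing flow along it by the largest feasible amount yields an adjacent vertex whose tree is $C\cup\{e\}$ minus exactly one edge of the cycle (the deleted edge, determined by the margins). Fix a tree $F$ and a demand node $\delta^*$; label edges of $F$ alternately $+,-,+,\dots$ along paths in $F$ starting at $\delta^*$, beginning with $+$ (each supply node is incident in $F$ to exactly one $+$edge; each demand node other than $\delta^*$ to exactly one $-$edge). A partially shaded tree is $(C,S)$ with $C$ a tree and $S\subseteq C\cap F$ the shaded edges (others unshaded); shaded edges carry their $F$-labels. (Inserting and) shading an edge $e\in F\setminus S$: if $e\in C$, set $\hat C=C$ and shade $e$; if $e\notin C$, let $\hat C$ be the tree obtained by pivoting $e$ into $C$ and shade $e$; the new shaded set is $S\cup\{e\}$ (minus the deleted edge if it was shaded). A supply node is well-connected if all edges of $F$ incident to it are in $S$, otherwise open; a demand node is well-connected if it is incident to no unshaded edge of $C$, otherwise open. A well-connected edge is a shaded edge incident to a well-connected node. Well-connected components: connected components of the graph on all nodes with the well-connected edges as edges. (UNO) holds in $(C,S)$ if every well-connected component contains exactly one open node. For a supply node $\sigma$, number the edges of $C$ along paths starting at $\sigma$ (edges at $\sigma$ get $1$); an edge is odd w.r.t. $\sigma$ if its number is odd. $\sigma$ satisfies (SIN) if every odd edge w.r.t. $\sigma$ is unshaded or a shaded $-$edge incident to a well-connected demand node. *)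

theory Defs
  imports Complex_Main
begin

text \<open>Matrices y in R^{N1 x N2} are functions nat => nat => real that vanish outside
  the index range {..<N1} x {..<N2} (indices are 0-based).\<close>

definition TP :: "nat \<Rightarrow> nat \<Rightarrow> (nat \<Rightarrow> real) \<Rightarrow> (nat \<Rightarrow> real) \<Rightarrow> (nat \<Rightarrow> nat \<Rightarrow> real) set" where
  "TP N1 N2 u v = {y. (\<forall>i j. (i \<ge> N1 \<or> j \<ge> N2) \<longrightarrow> y i j = 0)
      \<and> (\<forall>i<N1. (\<Sum>j<N2. y i j) = u i)
      \<and> (\<forall>j<N2. (\<Sum>i<N1. y i j) = v j)
      \<and> (\<forall>i j. 0 \<le> y i j)}"

definition nondegenerate :: "nat \<Rightarrow> nat \<Rightarrow> (nat \<Rightarrow> real) \<Rightarrow> (nat \<Rightarrow> real) \<Rightarrow> bool" where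
  "nondegenerate N1 N2 u v \<longleftrightarrow>
     \<not> (\<exists>I J. I \<noteq> {} \<and> I \<subset> {..<N1} \<and> J \<noteq> {} \<and> J \<subset> {..<N2} \<and> sum u I = sum v J)"

definition is_vertex :: "nat \<Rightarrow> nat \<Rightarrow> (nat \<Rightarrow> real) \<Rightarrow> (nat \<Rightarrow> real) \<Rightarrow> (nat \<Rightarrow> nat \<Rightarrow> real) \<Rightarrow> bool" where
  "is_vertex N1 N2 u v y \<longleftrightarrow> y \<in> TP N1 N2 u v \<and>
     (\<forall>a\<in>TP N1 N2 u v. \<forall>b\<in>TP N1 N2 u v. \<forall>t::real. 0 < t \<and> t < 1 \<and>
        y = (\<lambda>i j. t * a i j + (1 - t) * b i j) \<longrightarrow> a = y \<and> b = y)"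

text \<open>Support graph: edge (i,j) stands for {sigma^i, delta^j}.\<close>
definition supp :: "nat \<Rightarrow> nat \<Rightarrow> (nat \<Rightarrow> nat \<Rightarrow> real) \<Rightarrow> (nat \<times> nat) set" where
  "supp N1 N2 y = {(i,j). i < N1 \<and> j < N2 \<and> 0 < y i j}"

text \<open>Pivot: the flow change along the unique cycle of C + e, alternately +1/-1 starting
  with +1 at e, is the unique circulation (zero row and column sums) supported on C + e
  with value 1 at e.\<close>
definition pivot_dir :: "nat \<Rightarrow> nat \<Rightarrow> (nat \<Rightarrow> nat \<Rightarrow> real) \<Rightarrow> nat \<times> nat \<Rightarrow> (nat \<Rightarrow> nat \<Rightarrow> real)" where
  "pivot_dir N1 N2 y e = (THE d. d (fst e) (snd e) = 1
      \<and> (\<forall>i j. d i j \<noteq> 0 \<longrightarrow> (i,j) \<in> supp N1 N2 y \<union> {e})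
      \<and> (\<forall>i<N1. (\<Sum>j<N2. d i j) = 0)
      \<and> (\<forall>j<N2. (\<Sum>i<N1. d i j) = 0))"

definition pivot_step :: "nat \<Rightarrow> nat \<Rightarrow> (nat \<Rightarrow> nat \<Rightarrow> real) \<Rightarrow> nat \<times> nat \<Rightarrow> real" where
  "pivot_step N1 N2 y e = Sup {t::real. 0 \<le> t \<and>
      (\<forall>i j. 0 \<le> y i j + t * pivot_dir N1 N2 y e i j)}"

definition pivot :: "nat \<Rightarrow> nat \<Rightarrow> (nat \<Rightarrow> nat \<Rightarrow> real) \<Rightarrow> nat \<times> nat \<Rightarrow> (nat \<Rightarrow> nat \<Rightarrow> real)" where
  "pivot N1 N2 y e = (\<lambda>i j. y i j + pivot_step N1 N2 y e * pivot_dir N1 N2 y e i j)"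

definition succ_tree :: "nat \<Rightarrow> nat \<Rightarrow> (nat \<Rightarrow> nat \<Rightarrow> real) \<Rightarrow> nat \<times> nat \<Rightarrow> (nat \<times> nat) set" where
  "succ_tree N1 N2 y e = (if e \<in> supp N1 N2 y then supp N1 N2 y else supp N1 N2 (pivot N1 N2 y e))"

datatype node = Sup nat | Dem nat

definition valid_node :: "nat \<Rightarrow> nat \<Rightarrow> node \<Rightarrow> bool" where
  "valid_node N1 N2 x = (case x of Sup i \<Rightarrow> i < N1 | Dem j \<Rightarrow> j < N2)"

definition adj :: "(nat \<times> nat) set \<Rightarrow> node \<Rightarrow> node \<Rightarrow> bool" where
  "adj E a b \<longleftrightarrow> (\<exists>i j. (i,j) \<in> E \<and> ((a = Sup i \<and> b = Dem j) \<or> (a = Dem j \<and> b = Sup i)))"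

fun walk :: "(nat \<times> nat) set \<Rightarrow> node list \<Rightarrow> bool" where
  "walk E [] = False"
| "walk E [x] = True"
| "walk E (x # y # xs) = (adj E x y \<and> walk E (y # xs))"

definition connected_in :: "(nat \<times> nat) set \<Rightarrow> node \<Rightarrow> node \<Rightarrow> bool" where
  "connected_in E a b \<longleftrightarrow> (\<exists>xs. walk E xs \<and> hd xs = a \<and> last xs = b)"

definition dist :: "(nat \<times> nat) set \<Rightarrow> node \<Rightarrow> node \<Rightarrow> nat" where
  "dist E a b = (LEAST n. \<exists>xs. walk E xs \<and> hd xs = a \<and> last xs = b \<and> length xs = Suc n)"

text \<open>Number of edge e=(i,j) of a tree E along paths starting at node x (edges at x get 1):
  the distance from x to the farther endpoint of e.\<close>
definition edge_num :: "(nat \<times> nat) set \<Rightarrow> node \<Rightarrow> nat \<times> nat \<Rightarrow> nat" where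
  "edge_num E x e = max (dist E x (Sup (fst e))) (dist E x (Dem (snd e)))"

definition plus_edge :: "(nat \<times> nat) set \<Rightarrow> nat \<Rightarrow> nat \<times> nat \<Rightarrow> bool" where
  "plus_edge F ds e \<longleftrightarrow> e \<in> F \<and> odd (edge_num F (Dem ds) e)"

definition minus_edge :: "(nat \<times> nat) set \<Rightarrow> nat \<Rightarrow> nat \<times> nat \<Rightarrow> bool" where
  "minus_edge F ds e \<longleftrightarrow> e \<in> F \<and> even (edge_num F (Dem ds) e)"

definition wc_sup :: "(nat \<times> nat) set \<Rightarrow> (nat \<times> nat) set \<Rightarrow> nat \<Rightarrow> bool" where
  "wc_sup F S i \<longleftrightarrow> (\<forall>j. (i,j) \<in> F \<longrightarrow> (i,j) \<in> S)"

definition wc_dem :: "(nat \<times> nat) set \<Rightarrow> (nat \<times> nat) set \<Rightarrow> nat \<Rightarrow> bool" where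
  "wc_dem C S j \<longleftrightarrow> (\<forall>i. (i,j) \<in> C \<longrightarrow> (i,j) \<in> S)"

definition wc_node :: "(nat \<times> nat) set \<Rightarrow> (nat \<times> nat) set \<Rightarrow> (nat \<times> nat) set \<Rightarrow> node \<Rightarrow> bool" where
  "wc_node F C S x = (case x of Sup i \<Rightarrow> wc_sup F S i | Dem j \<Rightarrow> wc_dem C S j)"

definition open_node :: "nat \<Rightarrow> nat \<Rightarrow> (nat \<times> nat) set \<Rightarrow> (nat \<times> nat) set \<Rightarrow> (nat \<times> nat) set \<Rightarrow> node \<Rightarrow> bool" where
  "open_node N1 N2 F C S x \<longleftrightarrow> valid_node N1 N2 x \<and> \<not> wc_node F C S x"

definition wc_edges :: "(nat \<times> nat) set \<Rightarrow> (nat \<times> nat) set \<Rightarrow> (nat \<times> nat) set \<Rightarrow> (nat \<times> nat) set" where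
  "wc_edges F C S = {(i,j). (i,j) \<in> S \<and> (wc_node F C S (Sup i) \<or> wc_node F C S (Dem j))}"

text \<open>(UNO): every well-connected component (connected component of the graph on all
  nodes with the well-connected edges) contains exactly one open node.\<close>
definition UNO :: "nat \<Rightarrow> nat \<Rightarrow> (nat \<times> nat) set \<Rightarrow> (nat \<times> nat) set \<Rightarrow> (nat \<times> nat) set \<Rightarrow> bool" where
  "UNO N1 N2 F C S \<longleftrightarrow> (\<forall>x. valid_node N1 N2 x \<longrightarrow>
     card {z. valid_node N1 N2 z \<and> open_node N1 N2 F C S z \<and> connected_in (wc_edges F C S) x z} = 1)"

definition SIN :: "(nat \<times> nat) set \<Rightarrow> nat \<Rightarrow> (nat \<times> nat) set \<Rightarrow> (nat \<times> nat) set \<Rightarrow> nat \<Rightarrow> bool" where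
  "SIN F ds C S s \<longleftrightarrow> (\<forall>e\<in>C. odd (edge_num C (Sup s) e) \<longrightarrow>
      e \<notin> S \<or> (minus_edge F ds e \<and> wc_dem C S (snd e)))"

end

theory Submission
  imports Defs
begin

text \<open>Suppose the pivot inserting \<open>e = (s,t)\<close> into \<open>C\<close> deletes a shaded edge \<open>f = (i0,j0)\<close>.
  A cut argument shows that \<open>f\<close> is odd with respect to \<open>\<sigma>\<^sup>s\<close>, so by (SIN) it is a \<open>-\<close>edge of \<open>F\<close>
  at a well-connected demand node \<open>\<delta>\<^sup>j\<^sup>0\<close>.  Let \<open>X\<close> be the set of nodes reachable from \<open>\<delta>\<^sup>j\<^sup>0\<close>
  through well-connected edges and \<open>e\<close>, avoiding \<open>f\<close>.  Shortest walks from \<open>\<delta>\<^sup>j\<^sup>0\<close> move away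
  from the root of \<open>F\<close>, and away from \<open>\<sigma>\<^sup>s\<close> in \<open>C\<close>; with hypothesis (2) and (SIN) this shows that
  the only open node in \<open>X\<close> can be \<open>\<sigma>\<^sup>s\<close>, when \<open>e\<close> is its \<open>+\<close>edge.  Hence no edge of \<open>F\<close> leaves
  \<open>X\<close> at a supply node and no edge of \<open>C \<union> {e} - {f}\<close> enters it at a demand node.  The net supply
  of \<open>X\<close> is then negative for the flow of \<open>F\<close>, which sends flow into \<open>X\<close> along \<open>f\<close>, and
  nonnegative for the pivoted flow, which vanishes on \<open>f\<close>.\<close>

section \<open>Walks and distances\<close>

fun is_supply :: "node \<Rightarrow> bool" where
  "is_supply (Sup i) = True"
| "is_supply (Dem j) = False"

lemma adj_sym: "adj E a b \<Longrightarrow> adj E b a"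
  unfolding adj_def by blast

lemma adj_mono: "adj E a b \<Longrightarrow> E \<subseteq> E' \<Longrightarrow> adj E' a b"
  unfolding adj_def by blast

lemma adj_is_supply: "adj E a b \<Longrightarrow> is_supply a \<noteq> is_supply b"
  unfolding adj_def by auto

lemma adj_Diff_edge:
  "adj E a b \<Longrightarrow> \<not> ((a = Sup i \<and> b = Dem j) \<or> (a = Dem j \<and> b = Sup i)) \<Longrightarrow> adj (E - {(i,j)}) a b"
  unfolding adj_def by blast

lemma walk_iff_nth:
  "walk E xs \<longleftrightarrow> xs \<noteq> [] \<and> (\<forall>k. Suc k < length xs \<longrightarrow> adj E (xs!k) (xs!Suc k))"
proof (induction xs)
  case Nil
  then show ?case by simp
next
  case (Cons x xs)
  then show ?case
    by (cases xs) (auto simp: less_Suc_eq_0_disj nth_Cons split: nat.splits)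
qed

lemma walk_nth: "walk E xs \<Longrightarrow> Suc k < length xs \<Longrightarrow> adj E (xs!k) (xs!Suc k)"
  using walk_iff_nth by blast

lemma walk_not_Nil: "walk E xs \<Longrightarrow> xs \<noteq> []"
  using walk_iff_nth by blast

lemma walk_mono: "walk E xs \<Longrightarrow> E \<subseteq> E' \<Longrightarrow> walk E' xs"
  unfolding walk_iff_nth using adj_mono by blast

lemma walk_append:
  "walk E xs \<Longrightarrow> walk E ys \<Longrightarrow> adj E (last xs) (hd ys) \<Longrightarrow> walk E (xs @ ys)"
proof (induction xs rule: walk.induct)
  case (2 E x)
  then show ?case using walk_not_Nil[of E ys] by (cases ys) auto
qed simp_all

lemma walk_take: "walk E xs \<Longrightarrow> 0 < k \<Longrightarrow> walk E (take k xs)"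
  unfolding walk_iff_nth by (auto simp: nth_take)

lemma walk_drop: "walk E xs \<Longrightarrow> k < length xs \<Longrightarrow> walk E (drop k xs)"
  unfolding walk_iff_nth by auto

lemma walk_rev: "walk E xs \<Longrightarrow> walk E (rev xs)"
  unfolding walk_iff_nth
proof (intro conjI allI impI)
  assume xs: "xs \<noteq> [] \<and> (\<forall>k. Suc k < length xs \<longrightarrow> adj E (xs ! k) (xs ! Suc k))"
  then show "rev xs \<noteq> []" by simp
  fix k assume k: "Suc k < length (rev xs)"
  have "adj E (xs ! (length xs - Suc (Suc k))) (xs ! Suc (length xs - Suc (Suc k)))"
    using xs k by auto
  moreover have "Suc (length xs - Suc (Suc k)) = length xs - Suc k" using k by simp
  ultimately show "adj E (rev xs ! k) (rev xs ! Suc k)"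
    using k by (auto simp: rev_nth intro: adj_sym)
qed

lemma walk_join: "walk E xs \<Longrightarrow> walk E ys \<Longrightarrow> last xs = hd ys \<Longrightarrow> walk E (xs @ tl ys)"
proof (induction ys rule: walk.induct)
  case (3 E y z zs)
  then show ?case by (intro walk_append) auto
qed simp_all

lemma walk_Diff_edge:
  "walk E xs \<Longrightarrow> Sup i \<notin> set xs \<or> Dem j \<notin> set xs \<Longrightarrow> walk (E - {(i,j)}) xs"
  unfolding walk_iff_nth by (metis adj_Diff_edge nth_mem Suc_lessD)

lemma walk_is_supply_nth:
  "walk E xs \<Longrightarrow> k < length xs \<Longrightarrow> is_supply (xs!k) = is_supply (xs!0) \<longleftrightarrow> even k"
proof (induction k)
  case (Suc k)
  have "is_supply (xs!Suc k) \<noteq> is_supply (xs!k)"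
    using walk_nth[OF Suc.prems(1)] Suc.prems(2) adj_is_supply by fastforce
  then show ?case using Suc by auto
qed simp

lemma walk_is_supply_last:
  assumes "walk E xs" shows "is_supply (last xs) = is_supply (hd xs) \<longleftrightarrow> odd (length xs)"
proof -
  have "xs \<noteq> []" using walk_not_Nil[OF assms] .
  then show ?thesis
    using walk_is_supply_nth[OF assms, of "length xs - 1"]
    by (cases "length xs") (auto simp: last_conv_nth hd_conv_nth)
qed

lemma connected_in_refl: "connected_in E a a"
  unfolding connected_in_def by (intro exI[of _ "[a]"]) simp

lemma connected_in_sym: "connected_in E a b \<Longrightarrow> connected_in E b a"
  unfolding connected_in_def by (metis walk_rev walk_not_Nil hd_rev last_rev)

lemma connected_in_trans:
  "connected_in E a b \<Longrightarrow> connected_in E b c \<Longrightarrow> connected_in E a c"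
  unfolding connected_in_def
proof (elim exE conjE)
  fix xs ys assume a: "walk E xs" "hd xs = a" "last xs = b" "walk E ys" "hd ys = b" "last ys = c"
  then have "walk E (xs @ tl ys)" using walk_join by metis
  moreover have "hd (xs @ tl ys) = a" "last (xs @ tl ys) = c"
    using a walk_not_Nil[OF a(1)] walk_not_Nil[OF a(4)] by (cases ys; auto)+
  ultimately show "\<exists>zs. walk E zs \<and> hd zs = a \<and> last zs = c" by blast
qed

lemma connected_in_adj: "adj E a b \<Longrightarrow> connected_in E a b"
  unfolding connected_in_def by (intro exI[of _ "[a,b]"]) simp

lemma connected_in_mono: "connected_in E a b \<Longrightarrow> E \<subseteq> E' \<Longrightarrow> connected_in E' a b"
  unfolding connected_in_def using walk_mono by blast

lemma connected_in_edge_iff: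
  "(i,j) \<in> E \<Longrightarrow> connected_in E r (Sup i) \<longleftrightarrow> connected_in E r (Dem j)"
  by (metis adj_def adj_sym connected_in_adj connected_in_trans)

lemma shortest_walk_ex:
  assumes "connected_in E a b"
  shows "\<exists>xs. walk E xs \<and> hd xs = a \<and> last xs = b \<and> length xs = Suc (dist E a b)"
proof -
  obtain xs where xs: "walk E xs" "hd xs = a" "last xs = b"
    using assms unfolding connected_in_def by blast
  then have "\<exists>n xs. walk E xs \<and> hd xs = a \<and> last xs = b \<and> length xs = Suc n"
    using walk_not_Nil[OF xs(1)] by (intro exI[of _ "length xs - 1"] exI[of _ xs]) auto
  then show ?thesis unfolding dist_def by (rule LeastI_ex)
qed

lemma dist_le_walk: "walk E xs \<Longrightarrow> hd xs = a \<Longrightarrow> last xs = b \<Longrightarrow> dist E a b \<le> length xs - 1"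
  unfolding dist_def by (rule Least_le) (use walk_not_Nil in auto)

lemma dist_self: "dist E a a = 0"
  using dist_le_walk[of E "[a]" a a] by simp

lemma dist_le_walk_node:
  assumes w: "walk E xs" and h: "hd xs = r" and "x \<in> set xs"
  shows "dist E r x \<le> length xs - 1"
proof -
  obtain k where k: "k < length xs" "xs!k = x" using \<open>x \<in> set xs\<close> by (metis in_set_conv_nth)
  have "walk E (take (Suc k) xs)" using walk_take[OF w] by simp
  moreover have "hd (take (Suc k) xs) = r" using h k by (cases xs) auto
  moreover have "last (take (Suc k) xs) = x" using k by (simp add: take_Suc_conv_app_nth)
  ultimately have "dist E r x \<le> length (take (Suc k) xs) - 1" by (rule dist_le_walk)
  then show ?thesis using k by simp
qed

lemma dist_parity: "connected_in E a b \<Longrightarrow> is_supply a = is_supply b \<longleftrightarrow> even (dist E a b)"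
  using shortest_walk_ex walk_is_supply_last by fastforce

lemma dist_adj_le: "connected_in E r x \<Longrightarrow> adj E x w \<Longrightarrow> dist E r w \<le> dist E r x + 1"
proof -
  assume c: "connected_in E r x" and a: "adj E x w"
  obtain xs where xs: "walk E xs" "hd xs = r" "last xs = x" "length xs = Suc (dist E r x)"
    using shortest_walk_ex[OF c] by blast
  have "walk E (xs @ [w])" using walk_append[OF xs(1)] xs a by simp
  then have "dist E r w \<le> length (xs @ [w]) - 1"
    using xs walk_not_Nil[OF xs(1)] by (intro dist_le_walk) auto
  then show ?thesis using xs by simp
qed

text \<open>The graph is bipartite, so the two distances have different parity.\<close>
lemma dist_adj_cases:
  assumes c: "connected_in E r x" and a: "adj E x w"
  shows "dist E r w = dist E r x + 1 \<or> dist E r x = dist E r w + 1"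
proof -
  have c2: "connected_in E r w" using connected_in_trans[OF c connected_in_adj[OF a]] .
  have "even (dist E r x) \<noteq> even (dist E r w)"
    using dist_parity[OF c] dist_parity[OF c2] adj_is_supply[OF a] by auto
  then show ?thesis using dist_adj_le[OF c a] dist_adj_le[OF c2 adj_sym[OF a]] by presburger
qed

lemma shortest_walk_no_backtrack:
  assumes w: "walk E xs" and h: "hd xs = a" and l: "last xs = b"
    and len: "length xs = Suc (dist E a b)" and k: "Suc (Suc k) < length xs"
  shows "xs!k \<noteq> xs!Suc (Suc k)"
proof
  assume eq: "xs!k = xs!Suc (Suc k)"
  define ys where "ys = take (Suc k) xs @ drop (Suc (Suc (Suc k))) xs"
  have "walk E (drop (Suc (Suc k)) xs)" using walk_drop[OF w] k by simp
  moreover have drop: "drop (Suc (Suc k)) xs = xs!k # drop (Suc (Suc (Suc k))) xs"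
    using k eq by (simp add: Cons_nth_drop_Suc)
  moreover have "walk E (take (Suc k) xs)" using walk_take[OF w] by simp
  moreover have "last (take (Suc k) xs) = xs!k" using k by (simp add: take_Suc_conv_app_nth)
  ultimately have "walk E (take (Suc k) xs @ tl (drop (Suc (Suc k)) xs))"
    by (intro walk_join) auto
  then have "walk E ys" unfolding ys_def drop by simp
  moreover have "hd ys = a" using h k unfolding ys_def by (cases xs) auto
  moreover have "last ys = b"
  proof (cases "Suc (Suc (Suc k)) < length xs")
    case True
    then show ?thesis using l unfolding ys_def by (simp add: last_drop)
  next
    case False
    then have "length xs = Suc (Suc (Suc k))" using k by simp
    then have "b = xs!Suc (Suc k)" using l last_conv_nth[of xs] by force
    then show ?thesis using eq k False unfolding ys_def by (simp add: take_Suc_conv_app_nth)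
  qed
  ultimately have "dist E a b \<le> length ys - 1" by (intro dist_le_walk)
  moreover have "length ys = length xs - 2" unfolding ys_def using k by simp
  ultimately show False using len k by simp
qed

section \<open>Spanning trees\<close>

definition in_range :: "nat \<Rightarrow> nat \<Rightarrow> (nat \<times> nat) set \<Rightarrow> bool" where
  "in_range N1 N2 E \<longleftrightarrow> (\<forall>i j. (i,j) \<in> E \<longrightarrow> i < N1 \<and> j < N2)"

definition tree :: "nat \<Rightarrow> nat \<Rightarrow> (nat \<times> nat) set \<Rightarrow> bool" where
  "tree N1 N2 T \<longleftrightarrow> in_range N1 N2 T
     \<and> (\<forall>a b. valid_node N1 N2 a \<longrightarrow> valid_node N1 N2 b \<longrightarrow> connected_in T a b)
     \<and> (\<forall>i j. (i,j) \<in> T \<longrightarrow> \<not> connected_in (T - {(i,j)}) (Sup i) (Dem j))"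

lemma in_range_supp: "in_range N1 N2 (supp N1 N2 y)"
  unfolding in_range_def supp_def by auto

lemma adj_valid_node: "in_range N1 N2 E \<Longrightarrow> adj E a b \<Longrightarrow> valid_node N1 N2 a \<and> valid_node N1 N2 b"
  unfolding in_range_def adj_def valid_node_def by auto

lemma tree_in_range: "tree N1 N2 T \<Longrightarrow> in_range N1 N2 T"
  unfolding tree_def by blast

lemma tree_connected:
  "tree N1 N2 T \<Longrightarrow> valid_node N1 N2 a \<Longrightarrow> valid_node N1 N2 b \<Longrightarrow> connected_in T a b"
  unfolding tree_def by blast

lemma tree_Diff_edge_disconnected:
  "tree N1 N2 T \<Longrightarrow> (i,j) \<in> T \<Longrightarrow> \<not> connected_in (T - {(i,j)}) (Sup i) (Dem j)"
  unfolding tree_def by blast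

lemma tree_dist_adj_cases:
  assumes T: "tree N1 N2 T" and r: "valid_node N1 N2 r" and ab: "adj T a b"
  shows "dist T r b = dist T r a + 1 \<or> dist T r a = dist T r b + 1"
  using dist_adj_cases[OF tree_connected[OF T r] ab] adj_valid_node[OF tree_in_range[OF T] ab] by blast

lemma tree_parent_unique:
  assumes T: "tree N1 N2 T" and r: "valid_node N1 N2 r"
    and a1: "adj T x1 w" and a2: "adj T x2 w"
    and d1: "dist T r w = dist T r x1 + 1" and d2: "dist T r w = dist T r x2 + 1"
  shows "x1 = x2"
proof (rule ccontr)
  assume ne: "x1 \<noteq> x2"
  have v: "valid_node N1 N2 x1" "valid_node N1 N2 x2"
    using adj_valid_node[OF tree_in_range[OF T]] a1 a2 by blast+
  obtain W1 where W1: "walk T W1" "hd W1 = r" "last W1 = x1" "length W1 = Suc (dist T r x1)"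
    using shortest_walk_ex tree_connected[OF T r v(1)] by blast
  obtain W2 where W2: "walk T W2" "hd W2 = r" "last W2 = x2" "length W2 = Suc (dist T r x2)"
    using shortest_walk_ex tree_connected[OF T r v(2)] by blast
  have "w \<notin> set W1" "w \<notin> set W2"
    using dist_le_walk_node[OF W1(1,2)] dist_le_walk_node[OF W2(1,2)] W1(4) W2(4) d1 d2 by fastforce+
  obtain i j where ij: "(i,j) \<in> T" "(x1 = Sup i \<and> w = Dem j) \<or> (x1 = Dem j \<and> w = Sup i)"
    using a1 unfolding adj_def by blast
  then have "Sup i \<notin> set W1 \<or> Dem j \<notin> set W1" "Sup i \<notin> set W2 \<or> Dem j \<notin> set W2"
    using \<open>w \<notin> set W1\<close> \<open>w \<notin> set W2\<close> by auto
  then have "connected_in (T - {(i,j)}) r x1" "connected_in (T - {(i,j)}) r x2"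
    unfolding connected_in_def using walk_Diff_edge W1 W2 by blast+
  moreover have "adj (T - {(i,j)}) x2 w" using adj_Diff_edge[OF a2] ij(2) ne by auto
  ultimately have "connected_in (T - {(i,j)}) x1 w"
    by (meson connected_in_adj connected_in_sym connected_in_trans)
  then show False
    using tree_Diff_edge_disconnected[OF T ij(1)] ij(2) connected_in_sym by blast
qed

lemma tree_step_away:
  assumes T: "tree N1 N2 T" and r: "valid_node N1 N2 r"
    and ab: "adj T a b" and bc: "adj T b c" and "a \<noteq> c"
    and "dist T r b = dist T r a + 1"
  shows "dist T r c = dist T r b + 1"
  using tree_dist_adj_cases[OF T r bc] tree_parent_unique[OF T r ab adj_sym[OF bc]] assms(5,6) by auto

lemma tree_walk_away:
  assumes T: "tree N1 N2 T" and r: "valid_node N1 N2 r" and w: "walk T P"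
    and no_backtrack: "\<And>k. Suc (Suc k) < length P \<Longrightarrow> P!k \<noteq> P!Suc (Suc k)"
    and first: "dist T r (P!1) = dist T r (P!0) + 1"
    and k: "Suc k < length P"
  shows "dist T r (P!Suc k) = dist T r (P!k) + 1"
  using k
proof (induction k)
  case (Suc k)
  then show ?case
    using tree_step_away[OF T r walk_nth[OF w] walk_nth[OF w] no_backtrack] by simp
qed (use first in simp)

lemma tree_edge_points_away:
  assumes T: "tree N1 N2 T" and ij: "(i,j) \<in> T" and x: "valid_node N1 N2 x"
    and side: "connected_in (T - {(i,j)}) x (Sup i)"
  shows "dist T x (Dem j) = dist T x (Sup i) + 1"
proof (rule ccontr)
  assume "\<not> ?thesis"
  then have d: "dist T x (Sup i) = dist T x (Dem j) + 1"
    using tree_dist_adj_cases[OF T x, of "Sup i" "Dem j"] ij unfolding adj_def by blast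
  have "valid_node N1 N2 (Dem j)"
    using tree_in_range[OF T] ij unfolding in_range_def valid_node_def by auto
  then obtain W where W: "walk T W" "hd W = x" "last W = Dem j" "length W = Suc (dist T x (Dem j))"
    using shortest_walk_ex tree_connected[OF T x] by blast
  have "Sup i \<notin> set W" using dist_le_walk_node[OF W(1,2)] W(4) d by fastforce
  then have "connected_in (T - {(i,j)}) x (Dem j)"
    unfolding connected_in_def using walk_Diff_edge W by blast
  then show False
    using tree_Diff_edge_disconnected[OF T ij] side by (meson connected_in_sym connected_in_trans)
qed

lemma edge_num_odd_iff_Sup:
  assumes T: "tree N1 N2 T" and s: "valid_node N1 N2 (Sup s)" and ab: "(a,b) \<in> T"
  shows "odd (edge_num T (Sup s) (a,b)) \<longleftrightarrow> dist T (Sup s) (Dem b) = dist T (Sup s) (Sup a) + 1"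
proof -
  have ad: "adj T (Sup a) (Dem b)" using ab unfolding adj_def by blast
  have v: "valid_node N1 N2 (Sup a)" "valid_node N1 N2 (Dem b)"
    using adj_valid_node[OF tree_in_range[OF T] ad] by auto
  have "odd (dist T (Sup s) (Dem b))" "even (dist T (Sup s) (Sup a))"
    using dist_parity[OF tree_connected[OF T s v(2)]] dist_parity[OF tree_connected[OF T s v(1)]] by simp_all
  moreover have "edge_num T (Sup s) (a,b) = max (dist T (Sup s) (Sup a)) (dist T (Sup s) (Dem b))"
    unfolding edge_num_def by simp
  ultimately show ?thesis
    using tree_dist_adj_cases[OF T s ad] by (elim disjE) simp_all
qed

lemma plus_minus_edge_iff:
  assumes T: "tree N1 N2 F" and r: "valid_node N1 N2 (Dem ds)" and ab: "(a,b) \<in> F"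
  shows "plus_edge F ds (a,b) \<longleftrightarrow> dist F (Dem ds) (Sup a) = dist F (Dem ds) (Dem b) + 1"
    and "minus_edge F ds (a,b) \<longleftrightarrow> dist F (Dem ds) (Dem b) = dist F (Dem ds) (Sup a) + 1"
proof -
  have ad: "adj F (Sup a) (Dem b)" using ab unfolding adj_def by blast
  have v: "valid_node N1 N2 (Sup a)" "valid_node N1 N2 (Dem b)"
    using adj_valid_node[OF tree_in_range[OF T] ad] by auto
  have "even (dist F (Dem ds) (Dem b))" "odd (dist F (Dem ds) (Sup a))"
    using dist_parity[OF tree_connected[OF T r v(2)]] dist_parity[OF tree_connected[OF T r v(1)]] by simp_all
  moreover have "edge_num F (Dem ds) (a,b) = max (dist F (Dem ds) (Sup a)) (dist F (Dem ds) (Dem b))"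
    unfolding edge_num_def by simp
  ultimately show "plus_edge F ds (a,b) \<longleftrightarrow> dist F (Dem ds) (Sup a) = dist F (Dem ds) (Dem b) + 1"
    and "minus_edge F ds (a,b) \<longleftrightarrow> dist F (Dem ds) (Dem b) = dist F (Dem ds) (Sup a) + 1"
    using tree_dist_adj_cases[OF T r ad] ab unfolding plus_edge_def minus_edge_def
    by (elim disjE; simp)+
qed

section \<open>Flows and cuts\<close>

lemma TP_iff: "y \<in> TP N1 N2 u v \<longleftrightarrow> (\<forall>i j. (i \<ge> N1 \<or> j \<ge> N2) \<longrightarrow> y i j = 0)
      \<and> (\<forall>i<N1. (\<Sum>j<N2. y i j) = u i) \<and> (\<forall>j<N2. (\<Sum>i<N1. y i j) = v j) \<and> (\<forall>i j. 0 \<le> y i j)"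
  unfolding TP_def by simp

lemma TP_pos_in_range: "y \<in> TP N1 N2 u v \<Longrightarrow> 0 < y i j \<Longrightarrow> i < N1 \<and> j < N2"
  unfolding TP_iff by (metis less_irrefl not_le)

lemma TP_supp_iff: "y \<in> TP N1 N2 u v \<Longrightarrow> (i,j) \<in> supp N1 N2 y \<longleftrightarrow> y i j \<noteq> 0"
  unfolding supp_def TP_iff by (metis (mono_tags) case_prod_conv mem_Collect_eq not_le order_less_le)

definition supply_indices :: "nat \<Rightarrow> node set \<Rightarrow> nat set" where
  "supply_indices N1 X = {i. i < N1 \<and> Sup i \<in> X}"

definition demand_indices :: "nat \<Rightarrow> node set \<Rightarrow> nat set" where
  "demand_indices N2 X = {j. j < N2 \<and> Dem j \<in> X}"

lemma cut_identity:
  fixes w :: "nat \<Rightarrow> nat \<Rightarrow> real"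
  assumes rows: "\<forall>i<N1. (\<Sum>j<N2. w i j) = u i" and cols: "\<forall>j<N2. (\<Sum>i<N1. w i j) = v j"
    and I: "I \<subseteq> {..<N1}" and J: "J \<subseteq> {..<N2}"
  shows "sum u I - sum v J = (\<Sum>i\<in>I. \<Sum>j\<in>{..<N2} - J. w i j) - (\<Sum>i\<in>{..<N1} - I. \<Sum>j\<in>J. w i j)"
proof -
  have "sum u I = (\<Sum>i\<in>I. \<Sum>j<N2. w i j)" using rows I by (intro sum.cong) auto
  also have "\<dots> = (\<Sum>i\<in>I. \<Sum>j\<in>J. w i j) + (\<Sum>i\<in>I. \<Sum>j\<in>{..<N2} - J. w i j)"
    using J by (simp add: sum.distrib sum.subset_diff[of J "{..<N2}"])
  finally have u: "sum u I = \<dots>" .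
  have "sum v J = (\<Sum>j\<in>J. \<Sum>i<N1. w i j)" using cols J by (intro sum.cong) auto
  also have "\<dots> = (\<Sum>i<N1. \<Sum>j\<in>J. w i j)" by (rule sum.swap)
  also have "\<dots> = (\<Sum>i\<in>I. \<Sum>j\<in>J. w i j) + (\<Sum>i\<in>{..<N1} - I. \<Sum>j\<in>J. w i j)"
    using I by (simp add: sum.subset_diff[of I "{..<N1}"])
  finally show ?thesis using u by simp
qed

lemma TP_cut_identity:
  assumes "y \<in> TP N1 N2 u v"
  shows "sum u (supply_indices N1 X) - sum v (demand_indices N2 X)
    = (\<Sum>i\<in>supply_indices N1 X. \<Sum>j\<in>{..<N2} - demand_indices N2 X. y i j)
      - (\<Sum>i\<in>{..<N1} - supply_indices N1 X. \<Sum>j\<in>demand_indices N2 X. y i j)"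
  using assms unfolding TP_iff supply_indices_def demand_indices_def
  by (intro cut_identity) auto

lemma double_sum_ge_term:
  fixes w :: "nat \<Rightarrow> nat \<Rightarrow> real"
  assumes "finite A" "finite B" "a \<in> A" "b \<in> B" "\<forall>i j. 0 \<le> w i j"
  shows "w a b \<le> (\<Sum>i\<in>A. \<Sum>j\<in>B. w i j)"
proof -
  have "w a b \<le> (\<Sum>j\<in>B. w a j)" using assms by (intro member_le_sum) auto
  also have "\<dots> \<le> (\<Sum>i\<in>A. \<Sum>j\<in>B. w i j)" using assms by (intro member_le_sum sum_nonneg) auto
  finally show ?thesis .
qed

lemma TP_cut_no_outflow:
  assumes y: "y \<in> TP N1 N2 u v" and out: "\<forall>i j. Sup i \<in> X \<longrightarrow> Dem j \<notin> X \<longrightarrow> y i j = 0"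
  shows "sum u (supply_indices N1 X) \<le> sum v (demand_indices N2 X)"
    and "Sup i0 \<notin> X \<Longrightarrow> Dem j0 \<in> X \<Longrightarrow> 0 < y i0 j0
           \<Longrightarrow> sum u (supply_indices N1 X) < sum v (demand_indices N2 X)"
proof -
  let ?I = "supply_indices N1 X" and ?J = "demand_indices N2 X"
  have "(\<Sum>i\<in>?I. \<Sum>j\<in>{..<N2} - ?J. y i j) = 0"
    using out unfolding supply_indices_def demand_indices_def by simp
  then have eq: "sum u ?I - sum v ?J = - (\<Sum>i\<in>{..<N1} - ?I. \<Sum>j\<in>?J. y i j)"
    using TP_cut_identity[OF y] by simp
  have nn: "\<forall>i j. 0 \<le> y i j" using y unfolding TP_iff by blast
  have "0 \<le> (\<Sum>i\<in>{..<N1} - ?I. \<Sum>j\<in>?J. y i j)" using nn by (simp add: sum_nonneg)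
  then show "sum u ?I \<le> sum v ?J" using eq by linarith
  assume "Sup i0 \<notin> X" "Dem j0 \<in> X" "0 < y i0 j0"
  moreover have "i0 < N1" "j0 < N2" using TP_pos_in_range[OF y] \<open>0 < y i0 j0\<close> by auto
  ultimately have "y i0 j0 \<le> (\<Sum>i\<in>{..<N1} - ?I. \<Sum>j\<in>?J. y i j)"
    using nn unfolding supply_indices_def demand_indices_def by (intro double_sum_ge_term) auto
  then show "sum u ?I < sum v ?J" using eq \<open>0 < y i0 j0\<close> by linarith
qed

lemma TP_cut_no_inflow:
  assumes y: "y \<in> TP N1 N2 u v" and inflow: "\<forall>i j. Sup i \<notin> X \<longrightarrow> Dem j \<in> X \<longrightarrow> y i j = 0"
  shows "sum v (demand_indices N2 X) \<le> sum u (supply_indices N1 X)"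
    and "Sup i0 \<in> X \<Longrightarrow> Dem j0 \<notin> X \<Longrightarrow> 0 < y i0 j0
           \<Longrightarrow> sum v (demand_indices N2 X) < sum u (supply_indices N1 X)"
proof -
  let ?I = "supply_indices N1 X" and ?J = "demand_indices N2 X"
  have "(\<Sum>i\<in>{..<N1} - ?I. \<Sum>j\<in>?J. y i j) = 0"
    using inflow unfolding supply_indices_def demand_indices_def by simp
  then have eq: "sum u ?I - sum v ?J = (\<Sum>i\<in>?I. \<Sum>j\<in>{..<N2} - ?J. y i j)"
    using TP_cut_identity[OF y] by simp
  have nn: "\<forall>i j. 0 \<le> y i j" using y unfolding TP_iff by blast
  have "0 \<le> (\<Sum>i\<in>?I. \<Sum>j\<in>{..<N2} - ?J. y i j)" using nn by (simp add: sum_nonneg)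
  then show "sum v ?J \<le> sum u ?I" using eq by linarith
  assume "Sup i0 \<in> X" "Dem j0 \<notin> X" "0 < y i0 j0"
  moreover have "i0 < N1" "j0 < N2" using TP_pos_in_range[OF y] \<open>0 < y i0 j0\<close> by auto
  ultimately have "y i0 j0 \<le> (\<Sum>i\<in>?I. \<Sum>j\<in>{..<N2} - ?J. y i j)"
    using nn unfolding supply_indices_def demand_indices_def by (intro double_sum_ge_term) auto
  then show "sum v ?J < sum u ?I" using eq \<open>0 < y i0 j0\<close> by linarith
qed

section \<open>Circulations and vertices\<close>

definition circulation :: "nat \<Rightarrow> nat \<Rightarrow> (nat \<Rightarrow> nat \<Rightarrow> real) \<Rightarrow> bool" where
  "circulation N1 N2 c \<longleftrightarrow> (\<forall>i<N1. (\<Sum>j<N2. c i j) = 0) \<and> (\<forall>j<N2. (\<Sum>i<N1. c i j) = 0)"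

lemma circulation_diff:
  "circulation N1 N2 c \<Longrightarrow> circulation N1 N2 d \<Longrightarrow> circulation N1 N2 (\<lambda>i j. c i j - d i j)"
  unfolding circulation_def by (simp add: sum_subtractf)

lemma TP_add_circulation:
  assumes y: "y \<in> TP N1 N2 u v" and c: "circulation N1 N2 c"
    and range: "\<forall>i j. c i j \<noteq> 0 \<longrightarrow> i < N1 \<and> j < N2"
    and nonneg: "\<forall>i j. 0 \<le> y i j + t * c i j"
  shows "(\<lambda>i j. y i j + t * c i j) \<in> TP N1 N2 u v"
  unfolding TP_iff
proof (intro conjI allI impI)
  fix i j assume "N1 \<le> i \<or> N2 \<le> j"
  then show "y i j + t * c i j = 0" using y range unfolding TP_iff by force
next
  fix i assume "i < N1"
  then show "(\<Sum>j<N2. y i j + t * c i j) = u i"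
    using y c unfolding TP_iff circulation_def by (simp add: sum.distrib flip: sum_distrib_left)
next
  fix j assume "j < N2"
  then show "(\<Sum>i<N1. y i j + t * c i j) = v j"
    using y c unfolding TP_iff circulation_def by (simp add: sum.distrib flip: sum_distrib_left)
qed (use nonneg in blast)

text \<open>Otherwise \<open>y\<close> is the midpoint of the two feasible points obtained by pushing a little
  flow either way along \<open>c\<close>.\<close>
lemma vertex_no_circulation:
  assumes vx: "is_vertex N1 N2 u v y" and c: "circulation N1 N2 c"
    and supp: "\<forall>i j. c i j \<noteq> 0 \<longrightarrow> (i,j) \<in> supp N1 N2 y"
  shows "c = (\<lambda>i j. 0)"
proof (rule ccontr)
  assume "c \<noteq> (\<lambda>i j. 0)"
  then obtain i0 j0 where c0: "c i0 j0 \<noteq> 0" by (meson ext)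
  have y: "y \<in> TP N1 N2 u v" using vx unfolding is_vertex_def by blast
  define P where "P = {(i,j). (i,j) \<in> supp N1 N2 y \<and> c i j \<noteq> 0}"
  have "finite P"
    unfolding P_def supp_def by (rule finite_subset[of _ "{..<N1} \<times> {..<N2}"]) auto
  define \<epsilon> where "\<epsilon> = Min ((\<lambda>(i,j). y i j / \<bar>c i j\<bar>) ` P)"
  have "(i0,j0) \<in> P" using c0 supp unfolding P_def by auto
  then have \<epsilon>: "0 < \<epsilon>"
    unfolding \<epsilon>_def using \<open>finite P\<close> by (subst Min_gr_iff) (auto simp: P_def supp_def split: prod.splits)
  have small: "\<bar>\<epsilon> * c i j\<bar> \<le> y i j" for i j
  proof (cases "c i j = 0")
    case True
    then show ?thesis using y unfolding TP_iff by simp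
  next
    case False
    then have "(i,j) \<in> P" using supp unfolding P_def by auto
    then have "\<epsilon> \<le> y i j / \<bar>c i j\<bar>" unfolding \<epsilon>_def using \<open>finite P\<close> by (intro Min_le) auto
    then show ?thesis using False \<epsilon> by (simp add: le_divide_eq abs_mult)
  qed
  have range: "\<forall>i j. c i j \<noteq> 0 \<longrightarrow> i < N1 \<and> j < N2" using supp unfolding supp_def by blast
  define a where "a = (\<lambda>i j. y i j + \<epsilon> * c i j)"
  define b where "b = (\<lambda>i j. y i j + (-\<epsilon>) * c i j)"
  have "0 \<le> y i j + \<epsilon> * c i j" "0 \<le> y i j + (-\<epsilon>) * c i j" for i j
    using small[of i j] abs_le_iff[of "\<epsilon> * c i j" "y i j"] by auto
  then have a: "a \<in> TP N1 N2 u v" and b: "b \<in> TP N1 N2 u v"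
    unfolding a_def b_def by (blast intro: TP_add_circulation[OF y c range])+
  have "y = (\<lambda>i j. (1/2) * a i j + (1 - 1/2) * b i j)"
    unfolding a_def b_def by (auto simp: algebra_simps)
  with vx[unfolded is_vertex_def, THEN conjunct2, rule_format, OF a b, of "1/2"] have "a = y"
    by simp
  then have "\<epsilon> * c i0 j0 = 0" unfolding a_def by (metis add_cancel_left_right)
  then show False using \<epsilon> c0 by simp
qed

definition edge_indicator :: "node \<Rightarrow> node \<Rightarrow> nat \<Rightarrow> nat \<Rightarrow> real" where
  "edge_indicator a b i j = (if (a = Sup i \<and> b = Dem j) \<or> (a = Dem j \<and> b = Sup i) then 1 else 0)"

fun walk_flow :: "node list \<Rightarrow> nat \<Rightarrow> nat \<Rightarrow> real" where
  "walk_flow (x # y # xs) = (\<lambda>i j. edge_indicator x y i j - walk_flow (y # xs) i j)"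
| "walk_flow _ = (\<lambda>i j. 0)"

lemma edge_indicator_row_sum:
  assumes "adj E a b" "in_range N1 N2 E"
  shows "(\<Sum>j<N2. edge_indicator a b i j) = (if a = Sup i then 1 else 0) + (if b = Sup i then 1 else 0)"
proof -
  obtain i' j' where e: "(i',j') \<in> E" "(a = Sup i' \<and> b = Dem j') \<or> (a = Dem j' \<and> b = Sup i')"
    using assms(1) unfolding adj_def by blast
  have "j' < N2" using e assms(2) unfolding in_range_def by blast
  moreover have "edge_indicator a b i j = (if i = i' \<and> j = j' then 1 else 0)" for j
    using e unfolding edge_indicator_def by auto
  ultimately show ?thesis using e by (cases "i = i'") auto
qed

lemma edge_indicator_col_sum:
  assumes "adj E a b" "in_range N1 N2 E"
  shows "(\<Sum>i<N1. edge_indicator a b i j) = (if a = Dem j then 1 else 0) + (if b = Dem j then 1 else 0)"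
proof -
  obtain i' j' where e: "(i',j') \<in> E" "(a = Sup i' \<and> b = Dem j') \<or> (a = Dem j' \<and> b = Sup i')"
    using assms(1) unfolding adj_def by blast
  have "i' < N1" using e assms(2) unfolding in_range_def by blast
  moreover have "edge_indicator a b i j = (if i = i' \<and> j = j' then 1 else 0)" for i
    using e unfolding edge_indicator_def by auto
  ultimately show ?thesis using e by (cases "j = j'") auto
qed

lemma walk_flow_row_sum:
  "walk E xs \<Longrightarrow> in_range N1 N2 E \<Longrightarrow> (\<Sum>j<N2. walk_flow xs i j)
     = (if hd xs = Sup i then 1 else 0) + (-1) ^ length xs * (if last xs = Sup i then 1 else 0)"
proof (induction xs rule: walk_flow.induct)
  case (1 x y xs)
  then show ?case using edge_indicator_row_sum[of E x y] by (simp add: sum_subtractf)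
qed simp_all

lemma walk_flow_col_sum:
  "walk E xs \<Longrightarrow> in_range N1 N2 E \<Longrightarrow> (\<Sum>i<N1. walk_flow xs i j)
     = (if hd xs = Dem j then 1 else 0) + (-1) ^ length xs * (if last xs = Dem j then 1 else 0)"
proof (induction xs rule: walk_flow.induct)
  case (1 x y xs)
  then show ?case using edge_indicator_col_sum[of E x y] by (simp add: sum_subtractf)
qed simp_all

lemma walk_flow_supp: "walk E xs \<Longrightarrow> walk_flow xs i j \<noteq> 0 \<Longrightarrow> (i,j) \<in> E"
proof (induction xs rule: walk_flow.induct)
  case (1 x y xs)
  then show ?case
    by (cases "edge_indicator x y i j = 0") (auto simp: edge_indicator_def adj_def split: if_splits)
qed simp_all

text \<open>For a walk from \<open>\<sigma>\<^sup>s\<close> to \<open>\<delta>\<^sup>t\<close>, the alternating flow around the cycle closed by the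
  edge \<open>(s,t)\<close>, with \<open>+1\<close> on that edge.\<close>
definition cycle_flow :: "nat \<Rightarrow> nat \<Rightarrow> node list \<Rightarrow> nat \<Rightarrow> nat \<Rightarrow> real" where
  "cycle_flow s t W i j = (if (i,j) = (s,t) then 1 else 0) - walk_flow W i j"

lemma cycle_flow_circulation:
  assumes w: "walk E W" and E: "in_range N1 N2 E" and "s < N1" "t < N2"
    and h: "hd W = Sup s" and l: "last W = Dem t"
  shows "circulation N1 N2 (cycle_flow s t W)"
proof -
  have "even (length W)" using walk_is_supply_last[OF w] h l by simp
  then show ?thesis
    unfolding circulation_def cycle_flow_def
    using walk_flow_row_sum[OF w E] walk_flow_col_sum[OF w E] h l assms(3,4)
    by (simp add: sum_subtractf if_distrib[of "\<lambda>x. x * _"] sum.delta' cong: if_cong)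
qed

lemma cycle_flow_supp: "walk E W \<Longrightarrow> cycle_flow s t W i j \<noteq> 0 \<Longrightarrow> (i,j) \<in> insert (s,t) E"
  unfolding cycle_flow_def using walk_flow_supp by (auto split: if_splits)

lemma cycle_flow_closing_edge: "walk E W \<Longrightarrow> (s,t) \<notin> E \<Longrightarrow> cycle_flow s t W s t = 1"
  unfolding cycle_flow_def using walk_flow_supp by fastforce

lemma vertex_supp_Diff_edge_disconnected:
  assumes vx: "is_vertex N1 N2 u v y" and ij: "(i,j) \<in> supp N1 N2 y"
  shows "\<not> connected_in (supp N1 N2 y - {(i,j)}) (Sup i) (Dem j)"
proof
  assume "connected_in (supp N1 N2 y - {(i,j)}) (Sup i) (Dem j)"
  then obtain W where W: "walk (supp N1 N2 y - {(i,j)}) W" "hd W = Sup i" "last W = Dem j"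
    unfolding connected_in_def by blast
  have range: "in_range N1 N2 (supp N1 N2 y - {(i,j)})" "i < N1" "j < N2"
    using in_range_supp[of N1 N2 y] ij unfolding in_range_def by auto
  have "cycle_flow i j W = (\<lambda>a b. 0)"
    using cycle_flow_supp[OF W(1)] ij
    by (intro vertex_no_circulation[OF vx] cycle_flow_circulation[OF W(1) range W(2,3)]) blast
  then show False using cycle_flow_closing_edge[OF W(1)] by (metis Diff_iff insertI1 zero_neq_one)
qed

lemma sum_pos_iff_ne_empty:
  fixes u :: "nat \<Rightarrow> real"
  assumes "\<forall>i<N. 0 < u i" and "I \<subseteq> {..<N}"
  shows "0 < sum u I \<longleftrightarrow> I \<noteq> {}"
  using assms by (auto intro!: sum_pos dest: finite_subset)

lemma sum_less_total_iff:
  fixes u :: "nat \<Rightarrow> real"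
  assumes "\<forall>i<N. 0 < u i" and "I \<subseteq> {..<N}"
  shows "sum u I < sum u {..<N} \<longleftrightarrow> I \<noteq> {..<N}"
  using assms by (auto intro!: sum_strict_mono2 intro: less_imp_le)

text \<open>A disconnected support would split the margins into a balanced proper sub-problem.\<close>
lemma vertex_supp_connected:
  assumes y: "y \<in> TP N1 N2 u v" and u: "\<forall>i<N1. 0 < u i" and v: "\<forall>j<N2. 0 < v j"
    and total: "(\<Sum>i<N1. u i) = (\<Sum>j<N2. v j)" and nd: "nondegenerate N1 N2 u v"
    and a: "valid_node N1 N2 a" and b: "valid_node N1 N2 b"
  shows "connected_in (supp N1 N2 y) a b"
proof (rule ccontr)
  assume nc: "\<not> connected_in (supp N1 N2 y) a b"
  define X where "X = {x. connected_in (supp N1 N2 y) a x}"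
  define I where "I = supply_indices N1 X"
  define J where "J = demand_indices N2 X"
  have closed: "Sup i \<in> X \<longleftrightarrow> Dem j \<in> X" if "y i j \<noteq> 0" for i j
    using connected_in_edge_iff[of i j] TP_supp_iff[OF y] that unfolding X_def by blast
  then have "sum u I \<le> sum v J" "sum v J \<le> sum u I"
    unfolding I_def J_def using TP_cut_no_outflow(1)[OF y] TP_cut_no_inflow(1)[OF y] by blast+
  then have eq: "sum u I = sum v J" by simp
  have IJ: "I \<subseteq> {..<N1}" "J \<subseteq> {..<N2}"
    unfolding I_def J_def supply_indices_def demand_indices_def by auto
  have "a \<in> X" unfolding X_def using connected_in_refl by blast
  then have "I \<noteq> {} \<or> J \<noteq> {}"
    using a unfolding I_def J_def supply_indices_def demand_indices_def valid_node_def
    by (cases a) auto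
  then have ne: "I \<noteq> {}" "J \<noteq> {}"
    using eq sum_pos_iff_ne_empty[OF u IJ(1)] sum_pos_iff_ne_empty[OF v IJ(2)] by auto
  have "b \<notin> X" unfolding X_def using nc by blast
  then have "I \<noteq> {..<N1} \<or> J \<noteq> {..<N2}"
    using b unfolding I_def J_def supply_indices_def demand_indices_def valid_node_def
    by (cases b) auto
  then have "I \<noteq> {..<N1}" "J \<noteq> {..<N2}"
    using eq total sum_less_total_iff[OF u IJ(1)] sum_less_total_iff[OF v IJ(2)] by auto
  then show False using nd ne eq IJ unfolding nondegenerate_def by blast
qed

lemma vertex_supp_tree:
  assumes vx: "is_vertex N1 N2 u v y" and "\<forall>i<N1. 0 < u i" and "\<forall>j<N2. 0 < v j"
    and "(\<Sum>i<N1. u i) = (\<Sum>j<N2. v j)" and "nondegenerate N1 N2 u v"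
  shows "tree N1 N2 (supp N1 N2 y)"
  using assms in_range_supp vertex_supp_Diff_edge_disconnected[OF vx]
    vertex_supp_connected[of y N1 N2 u v] unfolding tree_def is_vertex_def by blast

section \<open>Pivots\<close>

definition pivot_cycle :: "nat \<Rightarrow> nat \<Rightarrow> (nat \<Rightarrow> nat \<Rightarrow> real) \<Rightarrow> nat \<times> nat \<Rightarrow> (nat \<Rightarrow> nat \<Rightarrow> real) \<Rightarrow> bool" where
  "pivot_cycle N1 N2 y e d \<longleftrightarrow> d (fst e) (snd e) = 1
      \<and> (\<forall>i j. d i j \<noteq> 0 \<longrightarrow> (i,j) \<in> insert e (supp N1 N2 y)) \<and> circulation N1 N2 d"

lemma pivot_cycle_pivot_dir:
  assumes vx: "is_vertex N1 N2 u v y" and T: "tree N1 N2 (supp N1 N2 y)"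
    and e: "fst e < N1" "snd e < N2" and e_notin: "e \<notin> supp N1 N2 y"
  shows "pivot_cycle N1 N2 y e (pivot_dir N1 N2 y e)"
proof -
  obtain s t where st: "e = (s,t)" by (cases e)
  have "valid_node N1 N2 (Sup s)" "valid_node N1 N2 (Dem t)" using e st unfolding valid_node_def by auto
  then obtain W where W: "walk (supp N1 N2 y) W" "hd W = Sup s" "last W = Dem t"
    using tree_connected[OF T] unfolding connected_in_def by blast
  have "pivot_cycle N1 N2 y e (cycle_flow s t W)"
    unfolding pivot_cycle_def st fst_conv snd_conv
  proof (intro conjI allI impI)
    show "cycle_flow s t W s t = 1" using cycle_flow_closing_edge[OF W(1)] e_notin st by simp
    show "(i,j) \<in> insert (s,t) (supp N1 N2 y)" if "cycle_flow s t W i j \<noteq> 0" for i j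
      using cycle_flow_supp[OF W(1) that] .
    show "circulation N1 N2 (cycle_flow s t W)"
      using cycle_flow_circulation[OF W(1) in_range_supp _ _ W(2,3)] e st by simp
  qed
  moreover have "d1 = d2" if "pivot_cycle N1 N2 y e d1" "pivot_cycle N1 N2 y e d2" for d1 d2
  proof -
    have "circulation N1 N2 (\<lambda>i j. d1 i j - d2 i j)"
      using that circulation_diff unfolding pivot_cycle_def by blast
    moreover have "(i,j) \<in> supp N1 N2 y" if nz: "d1 i j - d2 i j \<noteq> 0" for i j
    proof -
      have "(i,j) \<noteq> e" using nz \<open>pivot_cycle N1 N2 y e d1\<close> \<open>pivot_cycle N1 N2 y e d2\<close>
        unfolding pivot_cycle_def by auto
      moreover have "d1 i j \<noteq> 0 \<or> d2 i j \<noteq> 0" using nz by auto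
      ultimately show ?thesis
        using \<open>pivot_cycle N1 N2 y e d1\<close> \<open>pivot_cycle N1 N2 y e d2\<close>
        unfolding pivot_cycle_def by blast
    qed
    ultimately have "(\<lambda>i j. d1 i j - d2 i j) = (\<lambda>i j. 0)"
      by (intro vertex_no_circulation[OF vx]) blast+
    then show "d1 = d2" by (simp add: fun_eq_iff)
  qed
  ultimately have "\<exists>!d. pivot_cycle N1 N2 y e d" by blast
  then have "pivot_cycle N1 N2 y e (THE d. pivot_cycle N1 N2 y e d)" by (rule theI')
  moreover have "pivot_dir N1 N2 y e = (THE d. pivot_cycle N1 N2 y e d)"
    unfolding pivot_dir_def pivot_cycle_def circulation_def by simp
  ultimately show ?thesis by simp
qed

lemma pivot_nonneg:
  assumes vx: "is_vertex N1 N2 u v y" and T: "tree N1 N2 (supp N1 N2 y)"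
    and e: "fst e < N1" "snd e < N2" and e_notin: "e \<notin> supp N1 N2 y"
  shows "0 \<le> pivot N1 N2 y e i j"
proof -
  define d where "d = pivot_dir N1 N2 y e"
  define T0 where "T0 = {t::real. 0 \<le> t \<and> (\<forall>i j. 0 \<le> y i j + t * d i j)}"
  have d: "pivot_cycle N1 N2 y e d" unfolding d_def by (rule pivot_cycle_pivot_dir[OF assms])
  have y: "\<forall>i j. 0 \<le> y i j" using vx unfolding is_vertex_def TP_iff by blast
  have le: "x \<le> y i j / (- d i j)" if "x \<in> T0" "d i j < 0" for x i j
  proof -
    have "0 \<le> y i j + x * d i j" using that unfolding T0_def by blast
    then have "x * (- d i j) \<le> y i j" by simp
    moreover have "0 < - d i j" using that(2) by simp
    ultimately show ?thesis using pos_le_divide_eq by blast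
  qed
  have "\<exists>j<N2. d (fst e) j < 0"
  proof (rule ccontr)
    assume "\<not> ?thesis"
    then have "d (fst e) (snd e) \<le> (\<Sum>j<N2. d (fst e) j)" using e by (intro member_le_sum) auto
    then show False using d e unfolding pivot_cycle_def circulation_def by simp
  qed
  then have "bdd_above T0" using le unfolding bdd_above_def by blast
  moreover have "0 \<in> T0" unfolding T0_def using y by simp
  moreover have t: "pivot_step N1 N2 y e = Sup_class.Sup T0"
    unfolding pivot_step_def T0_def d_def by simp
  ultimately have step: "0 \<le> pivot_step N1 N2 y e"
    "d i j < 0 \<Longrightarrow> pivot_step N1 N2 y e \<le> y i j / (- d i j)"
    using le unfolding t by (blast intro: cSup_upper cSup_least)+
  have "pivot N1 N2 y e i j = y i j + pivot_step N1 N2 y e * d i j"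
    unfolding pivot_def d_def by simp
  also have "0 \<le> \<dots>"
  proof (cases "d i j < 0")
    case True
    then have "0 < - d i j" by simp
    then have "pivot_step N1 N2 y e * (- d i j) \<le> y i j" using step True pos_le_divide_eq by blast
    then show ?thesis by simp
  next
    case False
    then show ?thesis using step y by simp
  qed
  finally show ?thesis .
qed

lemma pivot_in_TP:
  assumes vx: "is_vertex N1 N2 u v y" and T: "tree N1 N2 (supp N1 N2 y)"
    and e: "fst e < N1" "snd e < N2" and e_notin: "e \<notin> supp N1 N2 y"
  shows "pivot N1 N2 y e \<in> TP N1 N2 u v"
proof -
  have d: "pivot_cycle N1 N2 y e (pivot_dir N1 N2 y e)" by (rule pivot_cycle_pivot_dir[OF assms])
  have "i < N1 \<and> j < N2" if "pivot_dir N1 N2 y e i j \<noteq> 0" for i j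
  proof -
    have "(i,j) \<in> insert e (supp N1 N2 y)" using d that unfolding pivot_cycle_def by blast
    then show ?thesis using e unfolding supp_def by auto
  qed
  then have "(\<lambda>i j. y i j + pivot_step N1 N2 y e * pivot_dir N1 N2 y e i j) \<in> TP N1 N2 u v"
    using vx d pivot_nonneg[OF assms] unfolding is_vertex_def pivot_cycle_def pivot_def
    by (intro TP_add_circulation) blast+
  then show ?thesis unfolding pivot_def .
qed

lemma pivot_supp:
  assumes vx: "is_vertex N1 N2 u v y" and T: "tree N1 N2 (supp N1 N2 y)"
    and e: "fst e < N1" "snd e < N2" and e_notin: "e \<notin> supp N1 N2 y"
    and nz: "pivot N1 N2 y e i j \<noteq> 0"
  shows "(i,j) \<in> insert e (supp N1 N2 y)"
proof -
  have y: "y \<in> TP N1 N2 u v" using vx unfolding is_vertex_def by blast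
  have d: "pivot_cycle N1 N2 y e (pivot_dir N1 N2 y e)" by (rule pivot_cycle_pivot_dir[OF vx T e e_notin])
  have "y i j \<noteq> 0 \<or> pivot_dir N1 N2 y e i j \<noteq> 0" using nz unfolding pivot_def by auto
  then show ?thesis
  proof
    assume "y i j \<noteq> 0"
    then show ?thesis using TP_supp_iff[OF y] by simp
  next
    assume "pivot_dir N1 N2 y e i j \<noteq> 0"
    then show ?thesis using d unfolding pivot_cycle_def by blast
  qed
qed

section \<open>Shading an edge\<close>

lemma plus_edge_unique:
  assumes F: "tree N1 N2 F" and r: "valid_node N1 N2 (Dem ds)"
    and "plus_edge F ds (i,j)" and "plus_edge F ds (i,j')"
  shows "j = j'"
proof -
  have "(i,j) \<in> F" "(i,j') \<in> F" using assms(3,4) unfolding plus_edge_def by auto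
  moreover from this have "adj F (Dem j) (Sup i)" "adj F (Dem j') (Sup i)" unfolding adj_def by blast+
  ultimately have "Dem j = Dem j'"
    using assms(3,4) plus_minus_edge_iff(1)[OF F r] by (intro tree_parent_unique[OF F r]) auto
  then show ?thesis by simp
qed

text \<open>Otherwise the component of \<open>\<sigma>\<^sup>i\<^sup>0\<close> in \<open>C - {(i0,j0)}\<close> has no inflow and positive outflow
  under \<open>y\<close>, but no outflow under the pivoted flow.\<close>
lemma pivot_zeroed_edge_side:
  assumes vx: "is_vertex N1 N2 u v y" and T: "tree N1 N2 (supp N1 N2 y)"
    and e: "fst e < N1" "snd e < N2" and e_notin: "e \<notin> supp N1 N2 y"
    and f: "(i0,j0) \<in> supp N1 N2 y" and zero: "pivot N1 N2 y e i0 j0 = 0"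
  shows "connected_in (supp N1 N2 y - {(i0,j0)}) (Sup i0) (Sup (fst e))"
proof (rule ccontr)
  let ?C = "supp N1 N2 y"
  define X where "X = {x. connected_in (?C - {(i0,j0)}) (Sup i0) x}"
  assume "\<not> connected_in (?C - {(i0,j0)}) (Sup i0) (Sup (fst e))"
  then have s: "Sup (fst e) \<notin> X" unfolding X_def by simp
  have y: "y \<in> TP N1 N2 u v" using vx unfolding is_vertex_def by blast
  have closed: "Sup i \<in> X \<longleftrightarrow> Dem j \<in> X" if "(i,j) \<in> ?C" "(i,j) \<noteq> (i0,j0)" for i j
    unfolding X_def mem_Collect_eq using that by (intro connected_in_edge_iff) blast
  have i0: "Sup i0 \<in> X" unfolding X_def by (rule CollectI, rule connected_in_refl)
  have j0: "Dem j0 \<notin> X" unfolding X_def using tree_Diff_edge_disconnected[OF T f] by blast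
  have "y i j = 0" if "Sup i \<notin> X" "Dem j \<in> X" for i j
    using closed[of i j] TP_supp_iff[OF y] that i0 by blast
  moreover have "0 < y i0 j0" using f unfolding supp_def by simp
  ultimately have less: "sum v (demand_indices N2 X) < sum u (supply_indices N1 X)"
    using TP_cut_no_inflow(2)[OF y _ i0 j0] by blast
  have "pivot N1 N2 y e i j = 0" if "Sup i \<in> X" "Dem j \<notin> X" for i j
    using pivot_supp[OF vx T e e_notin, of i j] closed[of i j] that zero s by (cases e) auto
  then have "sum u (supply_indices N1 X) \<le> sum v (demand_indices N2 X)"
    using TP_cut_no_outflow(1)[OF pivot_in_TP[OF vx T e e_notin]] by blast
  with less show False by simp
qed

lemma pivot_zeroed_edge_odd:
  assumes vx: "is_vertex N1 N2 u v y" and T: "tree N1 N2 (supp N1 N2 y)"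
    and e: "fst e < N1" "snd e < N2" and e_notin: "e \<notin> supp N1 N2 y"
    and f: "(i0,j0) \<in> supp N1 N2 y" and zero: "pivot N1 N2 y e i0 j0 = 0"
  shows "odd (edge_num (supp N1 N2 y) (Sup (fst e)) (i0,j0))"
proof -
  have "valid_node N1 N2 (Sup (fst e))" using e unfolding valid_node_def by simp
  then show ?thesis
    using tree_edge_points_away[OF T f] edge_num_odd_iff_Sup[OF T _ f]
      connected_in_sym[OF pivot_zeroed_edge_side[OF assms]] by blast
qed

lemma wc_edges_shaded: "wc_edges F C S \<subseteq> S"
  unfolding wc_edges_def by auto

text \<open>The hypotheses of the theorem for the interesting case, where the edge \<open>e = (s,t)\<close> is not yet
  in \<open>C\<close> and a pivot happens.\<close>
locale shading_step =
  fixes N1 N2 :: nat and u v :: "nat \<Rightarrow> real" and y yF :: "nat \<Rightarrow> nat \<Rightarrow> real"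
    and C F S :: "(nat \<times> nat) set" and ds s t :: nat
  defines "C \<equiv> supp N1 N2 y" and "F \<equiv> supp N1 N2 yF"
  assumes vertex_y: "is_vertex N1 N2 u v y" and vertex_yF: "is_vertex N1 N2 u v yF"
    and tree_C: "tree N1 N2 C" and tree_F: "tree N1 N2 F"
    and root: "ds < N2" and shaded: "S \<subseteq> C \<inter> F"
    and plus_shaded: "\<forall>e'\<in>S. plus_edge F ds e' \<longrightarrow> \<not> open_node N1 N2 F C S (Sup (fst e'))"
    and SIN: "SIN F ds C S s"
    and e_F: "(s,t) \<in> F" and e_C: "(s,t) \<notin> C"
    and choice: "if (\<exists>e'\<in>F. fst e' = s \<and> minus_edge F ds e' \<and> e' \<notin> S)
       then minus_edge F ds (s,t) \<and> (s,t) \<notin> S else plus_edge F ds (s,t)"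
begin

lemma e_range: "s < N1" "t < N2"
  using e_F unfolding F_def supp_def by auto

lemma valid_root: "valid_node N1 N2 (Dem ds)" and valid_s: "valid_node N1 N2 (Sup s)"
  using root e_range unfolding valid_node_def by simp_all

lemma s_open: "\<not> wc_sup F S s"
  using e_F e_C shaded unfolding wc_sup_def by auto

lemma shaded_plus_edge_wc:
  assumes "(i,j) \<in> S" and "dist F (Dem ds) (Sup i) = dist F (Dem ds) (Dem j) + 1"
  shows "wc_sup F S i"
proof -
  have "(i,j) \<in> F" using assms(1) shaded by auto
  then have "plus_edge F ds (i,j)" "valid_node N1 N2 (Sup i)"
    using assms(2) plus_minus_edge_iff(1)[OF tree_F valid_root] tree_in_range[OF tree_F]
    unfolding in_range_def valid_node_def by auto
  then show ?thesis
    using plus_shaded assms(1) unfolding open_node_def wc_node_def by fastforce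
qed

lemma shaded_odd_edge_wc:
  assumes "(i,j) \<in> S" and "dist C (Sup s) (Dem j) = dist C (Sup s) (Sup i) + 1"
  shows "wc_dem C S j"
proof -
  have "(i,j) \<in> C" using assms(1) shaded by auto
  then have "odd (edge_num C (Sup s) (i,j))"
    using assms(2) edge_num_odd_iff_Sup[OF tree_C valid_s] by simp
  then show ?thesis using SIN \<open>(i,j) \<in> C\<close> assms(1) unfolding SIN_def by auto
qed

end

text \<open>A shaded edge \<open>(i0,j0)\<close> that the pivot would delete has these properties, by
  \<open>pivot_zeroed_edge_odd\<close> and (SIN); they lead to a contradiction.\<close>
locale shaded_deletion = shading_step +
  fixes i0 j0 :: nat
  assumes f_shaded: "(i0,j0) \<in> S" and f_minus: "minus_edge F ds (i0,j0)"
    and j0_wc: "wc_dem C S j0" and f_away: "dist C (Sup s) (Dem j0) = dist C (Sup s) (Sup i0) + 1"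
begin

abbreviation G :: "(nat \<times> nat) set" where
  "G \<equiv> insert (s,t) (wc_edges F C S) - {(i0,j0)}"

lemma f_in_C: "(i0,j0) \<in> C" and f_in_F: "(i0,j0) \<in> F"
  using f_shaded shaded by auto

lemma G_subset_F: "G \<subseteq> F - {(i0,j0)}"
  using wc_edges_shaded[of F C S] shaded e_F by auto

lemma adj_G_cases:
  assumes "adj G a b"
  obtains "a = Dem t" "b = Sup s" | "a = Sup s" "b = Dem t"
  | i j where "(i,j) \<in> wc_edges F C S" "(i,j) \<noteq> (i0,j0)" "a = Sup i" "b = Dem j"
  | i j where "(i,j) \<in> wc_edges F C S" "(i,j) \<noteq> (i0,j0)" "a = Dem j" "b = Sup i"
  using assms unfolding adj_def by blast

definition shortest_from_j0 :: "node list \<Rightarrow> bool" where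
  "shortest_from_j0 P \<longleftrightarrow> walk G P \<and> hd P = Dem j0 \<and> length P = Suc (dist G (Dem j0) (last P))"

lemma shortest_from_j0_nth_0: "shortest_from_j0 P \<Longrightarrow> P!0 = Dem j0"
  unfolding shortest_from_j0_def using walk_not_Nil by (metis hd_conv_nth)

lemma shortest_from_j0_no_backtrack:
  "shortest_from_j0 P \<Longrightarrow> Suc (Suc k) < length P \<Longrightarrow> P!k \<noteq> P!Suc (Suc k)"
  unfolding shortest_from_j0_def using shortest_walk_no_backtrack by blast

text \<open>Prefixed by \<open>\<sigma>\<^sup>i\<^sup>0\<close>, a shortest walk from \<open>\<delta>\<^sup>j\<^sup>0\<close> is a walk in \<open>F\<close> that starts by
  leaving the root along the \<open>-\<close>edge \<open>(i0,j0)\<close>, so it moves away from the root throughout.\<close>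
lemma shortest_from_j0_away_in_F:
  assumes P: "shortest_from_j0 P" and k: "Suc k < length P"
  shows "dist F (Dem ds) (P!Suc k) = dist F (Dem ds) (P!k) + 1"
proof -
  obtain P' where P': "P = Dem j0 # P'"
    using P unfolding shortest_from_j0_def by (metis list.collapse walk_not_Nil)
  have "adj F (Sup i0) (Dem j0)" using f_in_F unfolding adj_def by blast
  moreover have "walk F P"
    using P walk_mono[OF _ order_trans[OF G_subset_F Diff_subset]] unfolding shortest_from_j0_def by blast
  ultimately have walk: "walk F (Sup i0 # P)" unfolding P' by simp
  have "(i0,j0) \<notin> G" by simp
  then have "P!1 \<noteq> Sup i0" if "1 < length P"
    using walk_nth[of G P 0] that P shortest_from_j0_nth_0[OF P]
    unfolding shortest_from_j0_def adj_def by auto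
  then have "(Sup i0 # P)!k \<noteq> (Sup i0 # P)!Suc (Suc k)" if "Suc (Suc k) < length (Sup i0 # P)" for k
    using that shortest_from_j0_no_backtrack[OF P] by (cases k) auto
  moreover have "dist F (Dem ds) (Dem j0) = dist F (Dem ds) (Sup i0) + 1"
    using f_minus plus_minus_edge_iff(2)[OF tree_F valid_root f_in_F] by simp
  ultimately show ?thesis
    using tree_walk_away[OF tree_F valid_root walk, of "Suc k"] k P' by simp
qed

lemma shortest_from_j0_not_s_to_t:
  assumes P: "shortest_from_j0 P" and k: "Suc k < length P"
  shows "\<not> (P!k = Sup s \<and> P!Suc k = Dem t)"
proof
  assume st: "P!k = Sup s \<and> P!Suc k = Dem t"
  then obtain k' where k': "k = Suc k'" using shortest_from_j0_nth_0[OF P] by (cases k) auto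
  have walk: "walk G P" using P unfolding shortest_from_j0_def by blast
  have "adj G (P!k') (Sup s)" using walk_nth[OF walk, of k'] k k' st by simp
  then show False
  proof (cases rule: adj_G_cases)
    case 1
    then show ?thesis using shortest_from_j0_no_backtrack[OF P, of k'] k k' st by simp
  next
    case (4 i j)
    then have "dist F (Dem ds) (Sup s) = dist F (Dem ds) (Dem j) + 1"
      using shortest_from_j0_away_in_F[OF P, of k'] k k' st by simp
    then show ?thesis using 4 wc_edges_shaded[of F C S] shaded_plus_edge_wc s_open by blast
  qed auto
qed

lemma shortest_from_j0_step_in_C:
  assumes P: "shortest_from_j0 P" and k: "Suc k < length P"
    and not_e: "\<not> (P!k = Dem t \<and> P!Suc k = Sup s)"
  shows "adj (C - {(i0,j0)}) (P!k) (P!Suc k)"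
proof -
  have "adj G (P!k) (P!Suc k)" using P k walk_nth unfolding shortest_from_j0_def by blast
  then show ?thesis
  proof (cases rule: adj_G_cases)
    case (3 i j)
    then show ?thesis using wc_edges_shaded[of F C S] shaded unfolding adj_def by blast
  next
    case (4 i j)
    then show ?thesis using wc_edges_shaded[of F C S] shaded unfolding adj_def by blast
  qed (use not_e shortest_from_j0_not_s_to_t[OF P k] in auto)
qed

text \<open>Apart from a traversal of \<open>(s,t)\<close>, which ends at the root \<open>\<sigma>\<^sup>s\<close>, the walk also moves away
  from \<open>\<sigma>\<^sup>s\<close> in \<open>C\<close>: it starts along an odd edge.\<close>
lemma shortest_from_j0_away_in_C:
  assumes P: "shortest_from_j0 P" and k: "Suc k < length P"
    and not_e: "\<not> (P!k = Dem t \<and> P!Suc k = Sup s)"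
  shows "dist C (Sup s) (P!Suc k) = dist C (Sup s) (P!k) + 1"
  using k not_e
proof (induction k)
  case 0
  have adj: "adj (C - {(i0,j0)}) (Dem j0) (P!1)"
    using shortest_from_j0_step_in_C[OF P 0] shortest_from_j0_nth_0[OF P] by simp
  then have "Sup i0 \<noteq> P!1" unfolding adj_def by auto
  moreover have "adj C (Sup i0) (Dem j0)" using f_in_C unfolding adj_def by blast
  ultimately have "dist C (Sup s) (P!1) = dist C (Sup s) (Dem j0) + 1"
    using tree_step_away[OF tree_C valid_s _ adj_mono[OF adj]] f_away by blast
  then show ?case using shortest_from_j0_nth_0[OF P] by simp
next
  case (Suc k)
  have adj2: "adj C (P!Suc k) (P!Suc (Suc k))"
    using adj_mono[OF shortest_from_j0_step_in_C[OF P Suc.prems] Diff_subset] .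
  show ?case
  proof (cases "P!k = Dem t \<and> P!Suc k = Sup s")
    case True
    then have "dist C (Sup s) (P!Suc k) = 0" using dist_self by simp
    then show ?thesis using tree_dist_adj_cases[OF tree_C valid_s adj2] by linarith
  next
    case False
    have k: "Suc k < length P" using Suc.prems(1) by simp
    have "adj C (P!k) (P!Suc k)"
      using adj_mono[OF shortest_from_j0_step_in_C[OF P k False] Diff_subset] .
    moreover have "dist C (Sup s) (P!Suc k) = dist C (Sup s) (P!k) + 1"
      using Suc.IH[OF k False] .
    moreover have "P!k \<noteq> P!Suc (Suc k)" using shortest_from_j0_no_backtrack[OF P] Suc.prems(1) .
    ultimately show ?thesis using tree_step_away[OF tree_C valid_s _ adj2] by blast
  qed
qed


abbreviation X :: "node set" where
  "X \<equiv> {x. connected_in G (Dem j0) x}"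

lemma open_node_in_X:
  assumes x: "x \<in> X" and open_x: "\<not> wc_node F C S x"
  shows "x = Sup s \<and> plus_edge F ds (s,t)"
proof -
  obtain P where "walk G P" "hd P = Dem j0" "last P = x" "length P = Suc (dist G (Dem j0) x)"
    using shortest_walk_ex x by blast
  then have P: "shortest_from_j0 P" and last: "last P = x"
    unfolding shortest_from_j0_def by auto
  have walk: "walk G P" using P unfolding shortest_from_j0_def by blast
  have "x \<noteq> Dem j0" using open_x j0_wc unfolding wc_node_def by auto
  moreover have "P \<noteq> []" using walk_not_Nil[OF walk] .
  then have "last P = P!(length P - 1)" by (rule last_conv_nth)
  ultimately have "length P \<noteq> 1" using last shortest_from_j0_nth_0[OF P] by auto
  moreover have "length P \<noteq> 0" using \<open>P \<noteq> []\<close> by simp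
  ultimately have "2 \<le> length P" by linarith
  then have "Suc (length P - 2) = length P - 1" by simp
  then obtain k where k: "Suc k < length P" "P!Suc k = x"
    using \<open>last P = P!(length P - 1)\<close> last \<open>2 \<le> length P\<close> by (intro that[of "length P - 2"]) auto
  have "adj G (P!k) x" using walk_nth[OF walk k(1)] k(2) by simp
  then show ?thesis
  proof (cases rule: adj_G_cases)
    case 1
    then have "dist F (Dem ds) (Sup s) = dist F (Dem ds) (Dem t) + 1"
      using shortest_from_j0_away_in_F[OF P k(1)] k by simp
    then show ?thesis using 1 plus_minus_edge_iff(1)[OF tree_F valid_root e_F] by simp
  next
    case 2
    then show ?thesis using shortest_from_j0_not_s_to_t[OF P k(1)] k by simp
  next
    case (3 i j)
    then have "dist C (Sup s) (Dem j) = dist C (Sup s) (Sup i) + 1"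
      using shortest_from_j0_away_in_C[OF P k(1)] k by simp
    then have "wc_dem C S j" using 3(1) wc_edges_shaded[of F C S] by (intro shaded_odd_edge_wc) auto
    then show ?thesis using 3(4) open_x unfolding wc_node_def by simp
  next
    case (4 i j)
    then have "dist F (Dem ds) (Sup i) = dist F (Dem ds) (Dem j) + 1"
      using shortest_from_j0_away_in_F[OF P k(1)] k by simp
    then have "wc_sup F S i" using 4(1) wc_edges_shaded[of F C S] by (intro shaded_plus_edge_wc) auto
    then show ?thesis using 4(4) open_x unfolding wc_node_def by simp
  qed
qed

lemma X_adj_closed: "x \<in> X \<Longrightarrow> adj G x w \<Longrightarrow> w \<in> X"
  using connected_in_trans connected_in_adj by blast

lemma Sup_i0_notin_X: "Sup i0 \<notin> X"
  using tree_Diff_edge_disconnected[OF tree_F f_in_F] connected_in_sym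
    connected_in_mono[OF _ G_subset_F] by blast

text \<open>At \<open>\<sigma>\<^sup>s\<close> this uses the choice of \<open>(s,t)\<close>: the other edges of \<open>F\<close> at \<open>\<sigma>\<^sup>s\<close> are then
  shaded \<open>-\<close>edges, which are odd w.r.t. \<open>\<sigma>\<^sup>s\<close>.\<close>
lemma X_F_closed:
  assumes i: "Sup i \<in> X" and ij: "(i,j) \<in> F"
  shows "Dem j \<in> X"
proof (cases "wc_sup F S i")
  case True
  then have "(i,j) \<in> wc_edges F C S" using ij unfolding wc_sup_def wc_edges_def wc_node_def by auto
  moreover have "i \<noteq> i0" using i Sup_i0_notin_X by auto
  ultimately show ?thesis using X_adj_closed[OF i] unfolding adj_def by blast
next
  case False
  then have s: "i = s" and e_plus: "plus_edge F ds (s,t)"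
    using open_node_in_X[OF i] unfolding wc_node_def by auto
  have "i \<noteq> i0" using i Sup_i0_notin_X by auto
  have "(s,j) \<in> G"
  proof (cases "j = t")
    case False
    have "(s,j) \<in> S"
    proof (rule ccontr)
      assume "(s,j) \<notin> S"
      then have "\<not> minus_edge F ds (s,j)"
        using choice e_plus ij s unfolding plus_edge_def minus_edge_def by (auto split: if_splits)
      then have "plus_edge F ds (s,j)" using ij s unfolding plus_edge_def minus_edge_def by simp
      then show False using plus_edge_unique[OF tree_F valid_root _ e_plus] False by blast
    qed
    moreover have "adj C (Sup s) (Dem j)" using \<open>(s,j) \<in> S\<close> shaded unfolding adj_def by blast
    then have "dist C (Sup s) (Dem j) = dist C (Sup s) (Sup s) + 1"
      using tree_dist_adj_cases[OF tree_C valid_s] dist_self[of C "Sup s"] by fastforce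
    ultimately have "wc_dem C S j" by (rule shaded_odd_edge_wc)
    then show ?thesis
      using \<open>(s,j) \<in> S\<close> \<open>i \<noteq> i0\<close> s unfolding wc_edges_def wc_node_def by auto
  qed (use \<open>i \<noteq> i0\<close> s in auto)
  then show ?thesis using X_adj_closed[OF i] s unfolding adj_def by blast
qed

lemma X_C_closed:
  assumes j: "Dem j \<in> X" and ij: "(i,j) \<in> insert (s,t) C" "(i,j) \<noteq> (i0,j0)"
  shows "Sup i \<in> X"
proof -
  have "wc_dem C S j" using open_node_in_X[OF j] unfolding wc_node_def by auto
  then have "(i,j) \<in> G" using ij unfolding wc_dem_def wc_edges_def wc_node_def by auto
  then show ?thesis using X_adj_closed[OF j] unfolding adj_def by blast
qed

text \<open>The cut \<open>X\<close> receives positive flow from \<open>\<sigma>\<^sup>i\<^sup>0\<close> in \<open>yF\<close> and sends none out, while the pivoted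
  flow would have no flow entering \<open>X\<close> if it vanished on \<open>(i0,j0)\<close>.\<close>
lemma pivot_keeps_edge: "pivot N1 N2 y (s,t) i0 j0 \<noteq> 0"
proof
  assume zero: "pivot N1 N2 y (s,t) i0 j0 = 0"
  have yF: "yF \<in> TP N1 N2 u v" using vertex_yF unfolding is_vertex_def by blast
  have "yF i j = 0" if "Sup i \<in> X" "Dem j \<notin> X" for i j
    using X_F_closed[OF that(1)] TP_supp_iff[OF yF] that(2) unfolding F_def by blast
  moreover have "0 < yF i0 j0" using f_in_F unfolding F_def supp_def by simp
  moreover have "Dem j0 \<in> X" by (simp add: connected_in_refl)
  ultimately have less: "sum u (supply_indices N1 X) < sum v (demand_indices N2 X)"
    using TP_cut_no_outflow(2)[OF yF _ Sup_i0_notin_X] by blast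
  have e: "fst (s,t) < N1" "snd (s,t) < N2" "(s,t) \<notin> supp N1 N2 y"
    using e_range e_C unfolding C_def by auto
  have "pivot N1 N2 y (s,t) i j = 0" if "Sup i \<notin> X" "Dem j \<in> X" for i j
    using pivot_supp[OF vertex_y tree_C[unfolded C_def] e, of i j] X_C_closed[OF that(2)] that(1) zero
    unfolding C_def by blast
  then have "sum v (demand_indices N2 X) \<le> sum u (supply_indices N1 X)"
    using TP_cut_no_inflow(1)[OF pivot_in_TP[OF vertex_y tree_C[unfolded C_def] e]] by blast
  with less show False by simp
qed

end

context shading_step
begin

lemma shaded_edges_survive_pivot: "S \<subseteq> supp N1 N2 (pivot N1 N2 y (s,t))"
proof
  fix g assume g: "g \<in> S"
  obtain i0 j0 where g_eq: "g = (i0,j0)" by (cases g)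
  have e: "fst (s,t) < N1" "snd (s,t) < N2" "(s,t) \<notin> supp N1 N2 y"
    using e_range e_C unfolding C_def by auto
  have f: "(i0,j0) \<in> supp N1 N2 y" using g g_eq shaded unfolding C_def by auto
  have "pivot N1 N2 y (s,t) i0 j0 \<noteq> 0"
  proof
    assume "pivot N1 N2 y (s,t) i0 j0 = 0"
    then have "odd (edge_num C (Sup s) (i0,j0))"
      using pivot_zeroed_edge_odd[OF vertex_y tree_C[unfolded C_def] e f] unfolding C_def by simp
    moreover have fC: "(i0,j0) \<in> C" using f unfolding C_def .
    ultimately have "minus_edge F ds (i0,j0)" "wc_dem C S j0"
      using SIN g g_eq unfolding SIN_def by auto
    moreover have "dist C (Sup s) (Dem j0) = dist C (Sup s) (Sup i0) + 1"
      using \<open>odd (edge_num C (Sup s) (i0,j0))\<close> edge_num_odd_iff_Sup[OF tree_C valid_s fC] by simp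
    ultimately interpret shaded_deletion N1 N2 u v y yF C F S ds s t i0 j0
      using g g_eq by unfold_locales (auto simp: C_def F_def)
    show False using pivot_keeps_edge \<open>pivot N1 N2 y (s,t) i0 j0 = 0\<close> by simp
  qed
  moreover have "0 \<le> pivot N1 N2 y (s,t) i0 j0"
    using pivot_nonneg[OF vertex_y tree_C[unfolded C_def] e] .
  ultimately show "g \<in> supp N1 N2 (pivot N1 N2 y (s,t))"
    using f g_eq unfolding supp_def by auto
qed

end

theorem lemma4:
  fixes N1 N2 :: nat and u v :: "nat \<Rightarrow> real"
    and y yF :: "nat \<Rightarrow> nat \<Rightarrow> real"
    and S :: "(nat \<times> nat) set" and ds s :: nat and e :: "nat \<times> nat"
  defines "C \<equiv> supp N1 N2 y" and "F \<equiv> supp N1 N2 yF"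
  assumes "N1 \<ge> 1" and "N2 \<ge> 1"
    and "\<forall>i<N1. 0 < u i" and "\<forall>j<N2. 0 < v j"
    and "(\<Sum>i<N1. u i) = (\<Sum>j<N2. v j)"
    and "nondegenerate N1 N2 u v"
    and "is_vertex N1 N2 u v y" and "is_vertex N1 N2 u v yF"
    and "ds < N2"
    and "S \<subseteq> C \<inter> F"
    and "UNO N1 N2 F C S"
    and "\<forall>e'\<in>S. plus_edge F ds e' \<longrightarrow> \<not> open_node N1 N2 F C S (Sup (fst e'))"
    and "s < N1"
    and "SIN F ds C S s"
    and "e \<in> F" and "fst e = s"
    and "if (\<exists>e'\<in>F. fst e' = s \<and> minus_edge F ds e' \<and> e' \<notin> S)
         then minus_edge F ds e \<and> e \<notin> S
         else plus_edge F ds e"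
  shows "S \<subseteq> succ_tree N1 N2 y e"
proof (cases "e \<in> C")
  case True
  then show ?thesis using assms unfolding succ_tree_def C_def by auto
next
  case False
  obtain t where e: "e = (s,t)" using \<open>fst e = s\<close> by (cases e) auto
  have "tree N1 N2 C" "tree N1 N2 F" unfolding C_def F_def using vertex_supp_tree assms by blast+
  then interpret shading_step N1 N2 u v y yF C F S ds s t
    using assms False unfolding C_def F_def e by unfold_locales auto
  show ?thesis
    using shaded_edges_survive_pivot False unfolding succ_tree_def C_def e by simp
qed

end
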